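(* For all positive integers $p$ and $d$, $$c_\psi(p,d)=\frac{1}{(d-1)!}\sum_{i=1}^{d}s(d,i)\,J_{i-1}(p),$$ where $c_\psi(p,d)$ is the number of primitive points $x\in\mathbb{Z}^d$ with all coordinates positive and $\|x\|_1=p$.
   Context: A point of $\mathbb{Z}^d$ is primitive if its coordinates are relatively prime. $J_q$ is Jordan's totient function: $J_q(p)=p^q\prod_{n}(1-n^{-q})$, the product over the primes $n$ dividing $p$ (so $J_0(1)=1$ and $J_0(p)=0$ for $p>1$). $s(d,i)$ are the signed Stirling numbers of the first kind, given by $s(d+1,i)=-d\,s(d,i)+s(d,i-1)$, $s(i,i)=1$, $s(d,0)=0$ for $d>0$. *)

theory Defs
  imports "HOL-Analysis.Analysis" "HOL-Computational_Algebra.Primes"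
begin

fun signed_stirling :: "nat \<Rightarrow> nat \<Rightarrow> int" where
  "signed_stirling 0 0 = 1"
| "signed_stirling 0 (Suc i) = 0"
| "signed_stirling (Suc d) 0 = 0"
| "signed_stirling (Suc d) (Suc i) =
     - int d * signed_stirling d (Suc i) + signed_stirling d i"

definition jordan_totient :: "nat \<Rightarrow> nat \<Rightarrow> real" where
  "jordan_totient q p =
     real p ^ q * (\<Prod>n\<in>prime_factors p. (1 - 1 / real n ^ q))"

definition c_psi :: "nat \<Rightarrow> nat \<Rightarrow> nat" where
  "c_psi p d = card {x :: nat \<Rightarrow> int.
      (\<forall>i<d. x i > 0) \<and> (\<forall>i\<ge>d. x i = 0) \<and>
      (\<Sum>i<d. \<bar>x i\<bar>) = int p \<and> Gcd (x ` {..<d}) = 1}"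

end

theory Submission
  imports Defs "HOL-Combinatorics.Stirling"
begin

(* A point counted by c_psi p d is a composition of p into d positive parts. There are
   C(m-1, d-1) compositions of m, and those whose parts are all divisible by k are k times the
   compositions of m/k. A composition is primitive iff no prime factor of p divides all its parts,
   so inclusion-exclusion over the sets B of prime factors of p gives
     c_psi p d = sum_B (-1)^|B| C(p / prod B - 1, d - 1).
   Finally (d-1)! C(m-1, d-1) = (m-1)(m-2)...(m-d+1) = sum_i s(d,i) m^(i-1) by the Stirling
   expansion of the falling factorial, and sum_B (-1)^|B| (p / prod B)^q is J_q(p) with its
   product over primes multiplied out. *)

lemma signed_stirling_eq_stirling:
  "signed_stirling n k = (-1) ^ (n + k) * int (stirling n k)"
  by (induction n k rule: signed_stirling.induct) (auto simp: algebra_simps)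

lemma prod_diff_of_nat_eq_signed_stirling:
  fixes x :: "'a :: comm_ring_1"
  shows "(\<Prod>i<n. x - of_nat i) = (\<Sum>k\<le>n. of_int (signed_stirling n k) * x ^ k)"
proof -
  have "pochhammer (- x) n = (\<Prod>i<n. - (x - of_nat i))"
    unfolding pochhammer_prod atLeast0LessThan by (rule prod.cong) simp_all
  also have "\<dots> = (-1) ^ n * (\<Prod>i<n. x - of_nat i)"
    by (simp only: prod_uminus card_lessThan)
  finally have "(\<Prod>i<n. x - of_nat i) = (-1) ^ n * pochhammer (- x) n"
    by (simp only: mult.assoc [symmetric] minus_one_mult_self mult_1)
  also have "\<dots> = (\<Sum>k\<le>n. (-1) ^ n * of_nat (stirling n k) * (- x) ^ k)"
    by (simp add: sum_distrib_left mult.assoc flip: stirling_pochhammer)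
  also have "\<dots> = (\<Sum>k\<le>n. of_int (signed_stirling n k) * x ^ k)"
    by (intro sum.cong refl) (simp add: signed_stirling_eq_stirling power_add power_minus [of x])
  finally show ?thesis .
qed

lemma fact_mult_binomial_eq_signed_stirling:
  assumes "0 < d" "0 < m"
  shows "fact (d - 1) * of_nat ((m - 1) choose (d - 1)) =
    (\<Sum>i=1..d. of_int (signed_stirling d i) * of_nat m ^ (i - 1) :: 'a :: field_char_0)"
proof -
  obtain e where d: "d = Suc e" using assms by (cases d) auto
  have "of_nat m * (fact e * of_nat ((m - 1) choose e)) =
      of_nat m * (\<Prod>i<e. of_nat (m - 1) - of_nat i :: 'a)"
    by (simp add: binomial_gbinomial gbinomial_mult_fact atLeast0LessThan)
  also have "\<dots> = (\<Prod>i<d. of_nat m - of_nat i)"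
    unfolding d prod.lessThan_Suc_shift using assms by (simp add: of_nat_diff algebra_simps)
  also have "\<dots> = (\<Sum>k\<le>d. of_int (signed_stirling d k) * of_nat m ^ k)"
    by (rule prod_diff_of_nat_eq_signed_stirling)
  also have "\<dots> = (\<Sum>i=1..d. of_int (signed_stirling d i) * of_nat m ^ i)"
    using assms
    by (simp add: atMost_atLeast0 sum.atLeast_Suc_atMost d del: signed_stirling.simps(4))
  also have "\<dots> = of_nat m * (\<Sum>i=1..d. of_int (signed_stirling d i) * of_nat m ^ (i - 1))"
    unfolding sum_distrib_left by (intro sum.cong refl) (auto simp: power_eq_if)
  finally show ?thesis
    using assms by (simp add: d del: signed_stirling.simps(4))
qed

lemma binomial_div_eq_signed_stirling:
  assumes "0 < d" "0 < n" "k dvd n"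
  shows "real ((n div k - 1) choose (d - 1)) = 1 / fact (d - 1) *
    (\<Sum>i=1..d. real_of_int (signed_stirling d i) * (real n / real k) ^ (i - 1))"
proof -
  have "0 < n div k" and "real (n div k) = real n / real k"
    using assms by (auto simp: dvd_div_eq_0_iff real_of_nat_div)
  then show ?thesis
    using fact_mult_binomial_eq_signed_stirling [OF assms(1), of "n div k", where 'a = real]
    by (simp add: field_simps)
qed

definition compositions :: "nat \<Rightarrow> nat \<Rightarrow> (nat \<Rightarrow> int) set" where
  "compositions d m = {x. (\<forall>i<d. 0 < x i) \<and> (\<forall>i\<ge>d. x i = 0) \<and> (\<Sum>i<d. x i) = int m}"

lemma finite_compositions: "finite (compositions d m)"
proof (rule finite_subset)
  show "compositions d m \<subseteq>
      {x. \<forall>i. (i \<in> {..<d} \<longrightarrow> x i \<in> {0..int m}) \<and> (i \<notin> {..<d} \<longrightarrow> x i = 0)}"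
  proof (intro subsetI CollectI allI conjI impI)
    fix x i assume x: "x \<in> compositions d m"
    then show "i \<notin> {..<d} \<Longrightarrow> x i = 0"
      by (simp add: compositions_def)
    assume "i \<in> {..<d}"
    have "x i \<le> (\<Sum>j<d. x j)"
      by (rule member_le_sum) (use x \<open>i \<in> {..<d}\<close> in \<open>auto simp: compositions_def less_imp_le\<close>)
    with x \<open>i \<in> {..<d}\<close> show "x i \<in> {0..int m}"
      by (auto simp: compositions_def less_imp_le)
  qed
  show "finite {x. \<forall>i. (i \<in> {..<d} \<longrightarrow> x i \<in> {0..int m}) \<and> (i \<notin> {..<d} \<longrightarrow> x i = (0::int))}"
    by (rule finite_set_of_finite_funs) simp_all
qed

lemma bij_betw_compositions_lists:
  "bij_betw (\<lambda>x. map (\<lambda>i. nat (x i - 1)) [0..<d]) (compositions d m)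
     {l. length l = d \<and> sum_list l + d = m}"
  (is "bij_betw ?f _ ?L")
proof -
  let ?g = "\<lambda>l i. if i < d then int (l ! i) + 1 else (0 :: int)"
  have sum_list_map: "sum_list (map f [0..<d]) = (\<Sum>i<d. f i)" for f :: "nat \<Rightarrow> nat"
    by (simp add: interv_sum_list_conv_sum_set_nat atLeast0LessThan)
  show ?thesis
  proof (rule bij_betw_byWitness [where f' = ?g])
    show "\<forall>x\<in>compositions d m. ?g (?f x) = x"
      by (auto simp: compositions_def fun_eq_iff)
    show "\<forall>l\<in>?L. ?f (?g l) = l"
      by (auto intro: nth_equalityI)
    show "?f ` compositions d m \<subseteq> ?L"
    proof (rule image_subsetI)
      fix x assume x: "x \<in> compositions d m"
      have "int (\<Sum>i<d. nat (x i - 1)) = (\<Sum>i<d. x i - 1)"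
        unfolding of_nat_sum using x by (intro sum.cong) (auto simp: compositions_def)
      with x have "int (\<Sum>i<d. nat (x i - 1)) + int d = int m"
        by (simp add: compositions_def sum_subtractf)
      then have "(\<Sum>i<d. nat (x i - 1)) + d = m"
        by (metis of_nat_add of_nat_eq_iff)
      then show "?f x \<in> ?L"
        by (simp add: sum_list_map)
    qed
    show "?g ` ?L \<subseteq> compositions d m"
    proof (rule image_subsetI)
      fix l assume l: "l \<in> ?L"
      then have "(\<Sum>i<d. int (l ! i) + 1) = int (sum_list l) + int d"
        by (simp add: sum.distrib sum_list_sum_nth atLeast0LessThan)
      with l show "?g l \<in> compositions d m"
        by (simp add: compositions_def)
    qed
  qed
qed

lemma card_compositions:
  assumes "0 < d" "0 < m"
  shows "card (compositions d m) = (m - 1) choose (d - 1)"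
proof -
  have "card (compositions d m) = card {l. length l = d \<and> sum_list l + d = m}"
    by (rule bij_betw_same_card [OF bij_betw_compositions_lists])
  also have "\<dots> = (m - 1) choose (d - 1)"
  proof (cases "d \<le> m")
    case True
    have "{l. length l = d \<and> sum_list l + d = m} = {l. length l = d \<and> sum_list l = m - d}"
      using True by auto
    then show ?thesis
      using True assms binomial_symmetric [of "d - 1" "m - 1"] by (simp add: card_length_sum_list)
  qed (use assms in auto)
  finally show ?thesis .
qed

lemma scale_mem_compositions_iff:
  assumes "0 < k"
  shows "(\<lambda>i. int k * y i) \<in> compositions d (k * n) \<longleftrightarrow> y \<in> compositions d n"
  using assms by (simp add: compositions_def zero_less_mult_iff flip: sum_distrib_left)

lemma card_compositions_dvd:
  assumes "0 < k"
  shows "card {x \<in> compositions d (k * n). \<forall>i<d. int k dvd x i} = card (compositions d n)"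
proof -
  have "{x \<in> compositions d (k * n). \<forall>i<d. int k dvd x i} = (\<lambda>y i. int k * y i) ` compositions d n"
  proof (intro equalityI subsetI)
    fix x assume x: "x \<in> {x \<in> compositions d (k * n). \<forall>i<d. int k dvd x i}"
    have "x i = int k * (x i div int k)" for i
      using x by (cases "i < d") (auto simp: compositions_def)
    then have x_eq: "x = (\<lambda>i. int k * (x i div int k))" ..
    have "(\<lambda>i. int k * (x i div int k)) \<in> compositions d (k * n)"
      using x by (simp only: x_eq [symmetric]) simp
    then have "(\<lambda>i. x i div int k) \<in> compositions d n"
      using assms scale_mem_compositions_iff by blast
    with x_eq show "x \<in> (\<lambda>y i. int k * y i) ` compositions d n"
      by (rule image_eqI)
  qed (use assms in \<open>auto simp: scale_mem_compositions_iff\<close>)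
  moreover have "inj_on (\<lambda>y i. int k * y i) (compositions d n)"
    using assms by (auto simp: inj_on_def fun_eq_iff)
  ultimately show ?thesis
    by (simp add: card_image)
qed

lemma Gcd_int_eq_1_iff:
  "Gcd (S :: int set) = 1 \<longleftrightarrow> (\<forall>q::nat. prime q \<longrightarrow> (\<exists>s\<in>S. \<not> int q dvd s))"
proof (intro iffI allI impI)
  fix q :: nat assume "Gcd S = 1" "prime q"
  show "\<exists>s\<in>S. \<not> int q dvd s"
  proof (rule ccontr)
    assume "\<not> (\<exists>s\<in>S. \<not> int q dvd s)"
    then have "int q dvd Gcd S"
      by (auto intro: Gcd_greatest)
    with \<open>Gcd S = 1\<close> \<open>prime q\<close> show False
      by simp
  qed
next
  assume no_common_prime: "\<forall>q::nat. prime q \<longrightarrow> (\<exists>s\<in>S. \<not> int q dvd s)"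
  show "Gcd S = 1"
  proof (rule ccontr)
    assume "Gcd S \<noteq> 1"
    then have "nat (Gcd S) \<noteq> 1"
      using Gcd_int_greater_eq_0 [of S] by linarith
    then obtain q where "prime q" "q dvd nat (Gcd S)"
      using prime_factor_nat by blast
    then have "int q dvd int (nat (Gcd S))"
      by (simp only: of_nat_dvd_iff)
    then have "int q dvd Gcd S"
      by simp
    then have "int q dvd s" if "s \<in> S" for s
      using that Gcd_dvd dvd_trans by blast
    with \<open>prime q\<close> no_common_prime show False by blast
  qed
qed

lemma prod_primes_dvd_iff:
  fixes a :: "'a :: semiring_gcd"
  assumes "finite S" "\<forall>q\<in>S. prime q"
  shows "\<Prod>S dvd a \<longleftrightarrow> (\<forall>q\<in>S. q dvd a)"
  using assms
proof (induction S rule: finite_induct)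
  case (insert q S)
  have "coprime q (\<Prod>S)"
    using insert by (intro prod_coprime_right primes_coprime) auto
  with insert show ?case
    by (auto intro: divides_mult dvd_mult_left dvd_mult_right)
qed simp

lemma prod_dvd_if_subset_prime_factors:
  fixes n :: "'a :: factorial_semiring_gcd"
  assumes "B \<subseteq> prime_factors n"
  shows "\<Prod>B dvd n"
  using assms finite_subset [OF assms]
  by (subst prod_primes_dvd_iff) (auto intro: in_prime_factors_imp_dvd in_prime_factors_imp_prime)

lemma int_card_Diff_UN:
  assumes "finite U" "finite A"
  shows "int (card (U - (\<Union>a\<in>A. X a))) =
    (\<Sum>B\<in>Pow A. (-1) ^ card B * int (card (U \<inter> (\<Inter>b\<in>B. X b))))"
proof -
  interpret Incl_Excl finite "int \<circ> card"
    by unfold_locales (auto simp: card_Un_disjnt)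
  \<comment> \<open>the summand for B = {} is card U, the empty intersection being UNIV\<close>
  have Pow_eq: "Pow A = insert {} {B. B \<subseteq> A \<and> B \<noteq> {}}"
    by auto
  have "U - (\<Union>a\<in>A. X a) = U - (\<Union>a\<in>A. U \<inter> X a)"
    by blast
  moreover have "card (U - (\<Union>a\<in>A. U \<inter> X a)) = card U - card (\<Union>a\<in>A. U \<inter> X a)"
    and "card (\<Union>a\<in>A. U \<inter> X a) \<le> card U"
    using assms by (auto intro!: card_Diff_subset card_mono)
  ultimately have "int (card (U - (\<Union>a\<in>A. X a))) = int (card U) - int (card (\<Union>a\<in>A. U \<inter> X a))"
    by simp
  also have "int (card (\<Union>a\<in>A. U \<inter> X a)) =
      (\<Sum>B | B \<subseteq> A \<and> B \<noteq> {}. (-1) ^ (card B + 1) * int (card (\<Inter>b\<in>B. U \<inter> X b)))"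
    using restricted_indexed [of A "\<lambda>a. U \<inter> X a"] assms by simp
  also have "\<dots> = - (\<Sum>B | B \<subseteq> A \<and> B \<noteq> {}. (-1) ^ card B * int (card (U \<inter> (\<Inter>b\<in>B. X b))))"
    unfolding sum_negf [symmetric]
  proof (intro sum.cong refl)
    fix B assume "B \<in> {B. B \<subseteq> A \<and> B \<noteq> {}}"
    then have "(\<Inter>b\<in>B. U \<inter> X b) = U \<inter> (\<Inter>b\<in>B. X b)"
      by auto
    then show "(-1) ^ (card B + 1) * int (card (\<Inter>b\<in>B. U \<inter> X b)) =
        - ((-1) ^ card B * int (card (U \<inter> (\<Inter>b\<in>B. X b))))"
      by simp
  qed
  finally show ?thesis
    using assms by (simp add: Pow_eq)
qed

lemma c_psi_eq_card_compositions_Diff: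
  assumes "0 < d"
  shows "c_psi p d = card (compositions d p - (\<Union>q\<in>prime_factors p. {x. \<forall>i<d. int q dvd x i}))"
proof -
  have "Gcd (x ` {..<d}) = 1 \<longleftrightarrow> (\<forall>q\<in>prime_factors p. \<exists>i<d. \<not> int q dvd x i)"
    if x: "x \<in> compositions d p" for x
  proof -
    have "p \<noteq> 0"
      using x assms sum_pos [of "{..<d}" x] by (auto simp: compositions_def)
    moreover have "q dvd p" if "\<forall>i<d. int q dvd x i" for q
      using x that dvd_sum [of "{..<d}" "int q" x] by (simp add: compositions_def)
    ultimately have "(\<forall>q::nat. prime q \<longrightarrow> (\<exists>i<d. \<not> int q dvd x i)) \<longleftrightarrow>
        (\<forall>q\<in>prime_factors p. \<exists>i<d. \<not> int q dvd x i)"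
      by (metis in_prime_factors_iff)
    then show ?thesis
      by (auto simp: Gcd_int_eq_1_iff)
  qed
  moreover have "(\<Sum>i<d. \<bar>x i\<bar>) = (\<Sum>i<d. x i)" if "\<forall>i<d. 0 < x i" for x :: "nat \<Rightarrow> int"
    using that by (intro sum.cong) auto
  ultimately show ?thesis
    unfolding c_psi_def by (intro arg_cong [where f = card]) (auto simp: compositions_def; blast)
qed

lemma int_c_psi_eq_sum_binomial:
  assumes "0 < p" "0 < d"
  shows "int (c_psi p d) =
    (\<Sum>B\<in>Pow (prime_factors p). (-1) ^ card B * int ((p div \<Prod>B - 1) choose (d - 1)))"
proof -
  have "card (compositions d p \<inter> (\<Inter>q\<in>B. {x. \<forall>i<d. int q dvd x i})) = (p div \<Prod>B - 1) choose (d - 1)"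
    if B: "B \<subseteq> prime_factors p" for B
  proof -
    have "finite B" "\<forall>q\<in>B. prime q"
      using B finite_subset by (auto simp: in_prime_factors_iff)
    then have "int (\<Prod>B) dvd a \<longleftrightarrow> (\<forall>q\<in>B. int q dvd a)" for a
      using prod_primes_dvd_iff [of "int ` B" a] by (simp add: prod.reindex)
    then have "compositions d p \<inter> (\<Inter>q\<in>B. {x. \<forall>i<d. int q dvd x i}) =
        {x \<in> compositions d (\<Prod>B * (p div \<Prod>B)). \<forall>i<d. int (\<Prod>B) dvd x i}"
      using prod_dvd_if_subset_prime_factors [OF B] by auto
    also have "card \<dots> = card (compositions d (p div \<Prod>B))"
      using \<open>\<forall>q\<in>B. prime q\<close> by (intro card_compositions_dvd) (simp add: prime_gt_0_nat prod_pos)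
    also have "\<dots> = (p div \<Prod>B - 1) choose (d - 1)"
      using assms prod_dvd_if_subset_prime_factors [OF B]
      by (intro card_compositions) (auto simp: dvd_div_eq_0_iff)
    finally show ?thesis .
  qed
  then show ?thesis
    using assms by (simp add: c_psi_eq_card_compositions_Diff int_card_Diff_UN finite_compositions)
qed

lemma prod_one_minus_eq_sum_Pow:
  fixes f :: "'a \<Rightarrow> 'b :: comm_ring_1"
  assumes "finite A"
  shows "(\<Prod>a\<in>A. 1 - f a) = (\<Sum>B\<in>Pow A. (-1) ^ card B * (\<Prod>a\<in>B. f a))"
  using prod_add [OF assms, of "\<lambda>a. - f a" "\<lambda>_. 1"] by (simp add: prod_uminus)

lemma jordan_totient_eq_sum_Pow:
  "jordan_totient q n = (\<Sum>B\<in>Pow (prime_factors n). (-1) ^ card B * (real n / real (\<Prod>B)) ^ q)"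
  unfolding jordan_totient_def prod_one_minus_eq_sum_Pow [OF finite_set_mset] sum_distrib_left
  by (intro sum.cong refl) (simp add: power_divide prod_dividef prod_power_distrib)

theorem theorem2p4:
  fixes p d :: nat
  assumes "p > 0" and "d > 0"
  shows "real (c_psi p d) =
    (1 / fact (d - 1)) * (\<Sum>i=1..d. real_of_int (signed_stirling d i) * jordan_totient (i - 1) p)"
proof -
  let ?P = "prime_factors p"
  have "real (c_psi p d) = (\<Sum>B\<in>Pow ?P. (-1) ^ card B * real ((p div \<Prod>B - 1) choose (d - 1)))"
    using arg_cong [OF int_c_psi_eq_sum_binomial [OF assms], of real_of_int] by simp
  also have "\<dots> = (\<Sum>B\<in>Pow ?P. (-1) ^ card B * (1 / fact (d - 1) *
      (\<Sum>i=1..d. real_of_int (signed_stirling d i) * (real p / real (\<Prod>B)) ^ (i - 1))))"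
    by (intro sum.cong refl arg_cong2 [where f = "(*)"] binomial_div_eq_signed_stirling
        prod_dvd_if_subset_prime_factors) (use assms in auto)
  also have "\<dots> = 1 / fact (d - 1) * (\<Sum>i=1..d. real_of_int (signed_stirling d i) *
      (\<Sum>B\<in>Pow ?P. (-1) ^ card B * (real p / real (\<Prod>B)) ^ (i - 1)))"
    by (simp add: sum_distrib_left mult_ac sum.swap [of _ "Pow ?P"])
  also have "\<dots> = 1 / fact (d - 1) *
      (\<Sum>i=1..d. real_of_int (signed_stirling d i) * jordan_totient (i - 1) p)"
    by (simp only: jordan_totient_eq_sum_Pow)
  finally show ?thesis .
qed

end
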